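(* Let $m,n\ge0$ be integers with $m+n$ even. If $n>m+2$, then there is no alternating $\mathcal B_{m,n}$-permutation.
   Context: For integers $i\le j$, $[i,j]=\{\ell\in\mathbb Z: i\le\ell\le j\}$ and $[N]=[1,N]$. $\mathcal B_{m,n}$ is the collection of nonempty subsets $I\subseteq[m+n]$ such that whenever $|I|\ge2$, $I\cap[m+1,m+n]$ is either $\emptyset$ or $[m+r,m+n]$ for some $1\le r\le n$ (a building set on $[m+n]$). For a building set $\mathcal B$ on $S$ (collection of nonempty subsets of $S$ containing all singletons, closed under unions of intersecting members; its connected components are its inclusion-maximal members; $\mathcal B|_I=\{J\in\mathcal B:J\subseteq I\}$) with $|S|=N$, a $\mathcal B$-permutation is a sequence $(x_1\cdots x_N)$ listing each element of $S$ once such that for each $i$, $x_i$ and $\max\{x_1,\dots,x_i\}$ lie in the same connected component of $\mathcal B|_{\{x_1,\dots,x_i\}}$; it is alternating if $x_1>x_2<x_3>\cdots$. *)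

theory Defs
  imports Main
begin

definition restr :: "'a set set \<Rightarrow> 'a set \<Rightarrow> 'a set set" where
  "restr B I = {J \<in> B. J \<subseteq> I}"

definition components :: "'a set set \<Rightarrow> 'a set set" where
  "components B = {J \<in> B. \<forall>K\<in>B. J \<subseteq> K \<longrightarrow> K = J}"

text \<open>B-permutation of the ground set S (list xs = x_1 ... x_N, 0-indexed).\<close>
definition B_perm :: "'a::linorder set set \<Rightarrow> 'a set \<Rightarrow> 'a list \<Rightarrow> bool" where
  "B_perm B S xs \<longleftrightarrow> distinct xs \<and> set xs = S \<and>
     (\<forall>i<length xs. \<exists>C\<in>components (restr B (set (take (Suc i) xs))).
         xs ! i \<in> C \<and> Max (set (take (Suc i) xs)) \<in> C)"

definition alternating :: "'a::linorder list \<Rightarrow> bool" where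
  "alternating xs \<longleftrightarrow> (\<forall>i. Suc i < length xs \<longrightarrow>
     (if even i then xs ! i > xs ! Suc i else xs ! i < xs ! Suc i))"

definition B_mn :: "nat \<Rightarrow> nat \<Rightarrow> nat set set" where
  "B_mn m n = {I. I \<noteq> {} \<and> I \<subseteq> {1..m+n} \<and>
     (card I \<ge> 2 \<longrightarrow> I \<inter> {m+1..m+n} = {} \<or>
        (\<exists>r. 1 \<le> r \<and> r \<le> n \<and> I \<inter> {m+1..m+n} = {m+r..m+n}))}"

end

theory Submission
  imports Defs
begin

text \<open>An interior valley x_{j-1} > x_j < x_{j+1} of an alternating B_{m,n}-permutation has
  value at most m: the prefix maximum exceeds x_j, so x_j lies in a non-singleton member C of
  B_{m,n} inside the prefix; if x_j > m, then C contains the whole upper block from x_j on,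
  including x_{j+1}, which is not yet in the prefix. For j = 1, 3, ..., m+n-3 this gives
  (m+n-2)/2 distinct values in [1,m], so n \<le> m+2.\<close>

lemma nth_notin_set_take:
  assumes "distinct xs" "k \<le> i" "i < length xs"
  shows "xs ! i \<notin> set (take k xs)"
proof
  assume "xs ! i \<in> set (take k xs)"
  then obtain l where "l < k" "l < length xs" "xs ! l = xs ! i"
    by (auto simp: in_set_conv_nth)
  with assms show False by (simp add: nth_eq_iff_index_eq)
qed

lemma B_perm_length:
  assumes "B_perm B S xs"
  shows "length xs = card S"
  using assms distinct_card by (fastforce simp: B_perm_def)

lemma B_perm_nontrivial_member:
  assumes bp: "B_perm B S xs" and j: "j < length xs"
    and bigger: "y \<in> set (take j xs)" "xs ! j < y"
  obtains C where "C \<in> B" "C \<subseteq> set (take (Suc j) xs)" "xs ! j \<in> C" "2 \<le> card C"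
proof -
  define P where "P = set (take (Suc j) xs)"
  obtain C where C: "C \<in> components (restr B P)" "xs ! j \<in> C" "Max P \<in> C"
    using bp j unfolding B_perm_def P_def by blast
  have CB: "C \<in> B" "C \<subseteq> P" using C(1) by (auto simp: components_def restr_def)
  have "y \<in> P" using bigger(1) set_take_subset_set_take[of j "Suc j" xs]
    unfolding P_def by auto
  hence "xs ! j < Max P" using bigger(2) unfolding P_def
    by (meson List.finite_set Max_ge order_less_le_trans)
  moreover have "finite C" using CB(2) finite_subset unfolding P_def by blast
  ultimately have "2 \<le> card C"
    using C(2,3) card_mono[of C "{xs ! j, Max P}"] by fastforce
  with CB C(2) show thesis using that unfolding P_def by blast
qed

lemma B_mn_upper_closed:
  assumes "C \<in> B_mn m n" "2 \<le> card C" "x \<in> C" "m < x" "x \<le> y" "y \<le> m + n"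
  shows "y \<in> C"
proof -
  have "x \<in> C \<inter> {m+1..m+n}" using assms(1,3,4) by (auto simp: B_mn_def)
  moreover obtain r where r: "C \<inter> {m+1..m+n} = {m+r..m+n}"
    using assms(1,2) calculation unfolding B_mn_def by blast
  ultimately have "m + r \<le> x" by auto
  hence "y \<in> C \<inter> {m+1..m+n}" using r assms(5,6) by auto
  thus ?thesis by blast
qed

lemma B_mn_perm_valley_le:
  assumes bp: "B_perm (B_mn m n) {1..m+n} xs"
    and j: "0 < j" "Suc j < length xs"
    and valley: "xs ! j < xs ! (j - 1)" "xs ! j < xs ! Suc j"
  shows "xs ! j \<le> m"
proof (rule ccontr)
  assume upper: "\<not> xs ! j \<le> m"
  have d: "distinct xs" and s: "set xs = {1..m+n}" using bp by (auto simp: B_perm_def)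
  have "take j xs ! (j - 1) \<in> set (take j xs)" using j by (intro nth_mem) simp
  hence "xs ! (j - 1) \<in> set (take j xs)" using j by simp
  then obtain C where C: "C \<in> B_mn m n" "C \<subseteq> set (take (Suc j) xs)" "xs ! j \<in> C" "2 \<le> card C"
    using B_perm_nontrivial_member[OF bp _ _ valley(1)] j by auto
  have "xs ! Suc j \<le> m + n" using s j(2) nth_mem by fastforce
  hence "xs ! Suc j \<in> C"
    using B_mn_upper_closed[OF C(1,4,3)] upper valley(2) by simp
  moreover have "xs ! Suc j \<notin> set (take (Suc j) xs)"
    using nth_notin_set_take[OF d _ j(2)] by simp
  ultimately show False using C(2) by blast
qed

lemma alternating_odd_valley:
  assumes "alternating xs" "2 * k + 2 < length xs"
  shows "xs ! (2 * k + 1) < xs ! (2 * k)" "xs ! (2 * k + 1) < xs ! (2 * k + 2)"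
  using assms(1)[unfolded alternating_def, rule_format, of "2 * k"]
    assms(1)[unfolded alternating_def, rule_format, of "2 * k + 1"] assms(2)
  by auto

theorem lemma6p2:
  fixes m n :: nat
  assumes "even (m + n)" and "n > m + 2"
  shows "\<not> (\<exists>xs. B_perm (B_mn m n) {1..m+n} xs \<and> alternating xs)"
proof
  assume "\<exists>xs. B_perm (B_mn m n) {1..m+n} xs \<and> alternating xs"
  then obtain xs where bp: "B_perm (B_mn m n) {1..m+n} xs" and al: "alternating xs" by blast
  have d: "distinct xs" and s: "set xs = {1..m+n}" using bp by (auto simp: B_perm_def)
  have len: "length xs = m + n" using B_perm_length[OF bp] by simp
  define K where "K = (m + n - 2) div 2"
  have valleys: "xs ! (2 * k + 1) \<in> {1..m}" if "k < K" for k
  proof -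
    have k: "2 * k + 2 < length xs" using that len unfolding K_def by linarith
    have "xs ! (2 * k + 1) \<le> m"
      using B_mn_perm_valley_le[OF bp] alternating_odd_valley[OF al k] k by simp
    moreover have "xs ! (2 * k + 1) \<in> {1..m+n}" using s k nth_mem by fastforce
    ultimately show ?thesis by simp
  qed
  have "inj_on (\<lambda>k. xs ! (2 * k + 1)) {..<K}"
    using d len unfolding K_def by (auto intro!: inj_onI simp: nth_eq_iff_index_eq)
  hence "K \<le> m" using card_inj_on_le[of _ "{..<K}" "{1..m}"] valleys by fastforce
  thus False using assms unfolding K_def by presburger
qed

end
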